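(* Let $0\le\alpha<1$ and let $r_0=r_0(\alpha)$ be the real root in $(0,1)$ of the equation \[2\big(1-\alpha+2(2-\alpha)r\big)(1-r)^4=1-\alpha+4r+(1+\alpha)r^2.\] Let $\mathcal{F}$ be the class of analytic functions $f(z)=z+\sum_{n\ge2}a_nz^n$ on $\mathbb{D}$ with $a_2=0$ and $|a_n|\le n$ for all $n\ge3$. Then every $f\in\mathcal{F}$ satisfies $\left|\frac{zf''(z)}{f'(z)}\right|\le1-\alpha$ for $|z|\le r_0$; $r_0(\alpha)$ is the radius of convexity of order $\alpha$ of $\mathcal{F}$; and $r_0(1/2)\approx0.125429$ is the radius of uniform convexity of $\mathcal{F}$. All results are sharp (in particular $r_0$ in the first statement cannot be replaced by any larger number).
   Context: $\mathbb{D}=\{z\in\mathbb{C}:|z|<1\}$. For a class $\mathcal{F}$ of analytic functions on $\mathbb{D}$ normalized by $f(0)=0$, $f'(0)=1$, and $0\le\alpha<1$, the radius of convexity of order $\alpha$ of $\mathcal{F}$ is the supremum of $r\in(0,1]$ such that every $f\in\mathcal{F}$ satisfies $f'(z)\ne0$ and $\operatorname{Re}\big(1+zf''(z)/f'(z)\big)>\alpha$ for $|z|<r$. The radius of uniform convexity of $\mathcal{F}$ is the supremum of $r\in(0,1]$ such that every $f\in\mathcal{F}$ satisfies $f'(z)\ne0$ and $\operatorname{Re}\big(1+zf''(z)/f'(z)\big)>\left|zf''(z)/f'(z)\right|$ for $|z|<r$. *)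

theory Defs
  imports "HOL-Analysis.Analysis"
begin

definition classF :: "(complex \<Rightarrow> complex) set" where
  "classF = {f. \<exists>a :: nat \<Rightarrow> complex.
      a 0 = 0 \<and> a 1 = 1 \<and> a 2 = 0 \<and> (\<forall>n\<ge>3. norm (a n) \<le> real n) \<and>
      (\<forall>z\<in>ball 0 1. (\<lambda>n. a n * z ^ n) sums f z)}"

definition radius_convexity_order :: "real \<Rightarrow> (complex \<Rightarrow> complex) set \<Rightarrow> real" where
  "radius_convexity_order \<alpha> F = Sup {r. 0 < r \<and> r \<le> 1 \<and>
      (\<forall>f\<in>F. \<forall>z. norm z < r \<longrightarrow>
          deriv f z \<noteq> 0 \<and>
          Re (1 + z * deriv (deriv f) z / deriv f z) > \<alpha>)}"

definition radius_uniform_convexity :: "(complex \<Rightarrow> complex) set \<Rightarrow> real" where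
  "radius_uniform_convexity F = Sup {r. 0 < r \<and> r \<le> 1 \<and>
      (\<forall>f\<in>F. \<forall>z. norm z < r \<longrightarrow>
          deriv f z \<noteq> 0 \<and>
          Re (1 + z * deriv (deriv f) z / deriv f z) > norm (z * deriv (deriv f) z / deriv f z))}"

end

theory Submission
  imports Defs
begin

text \<open>
  Let \<open>f\<close> be in the class and \<open>|z| = r < 1\<close>. Since \<open>|a_n| \<le> n\<close>, the series for \<open>f' - 1\<close>
  and \<open>z f''\<close> are dominated termwise by \<open>B(r) = \<Sum>_{n\<ge>3} n^2 r^(n-1)\<close> and
  \<open>A(r) = \<Sum>_{n\<ge>3} n^2 (n-1) r^(n-1)\<close>, so \<open>|z f''(z) / f'(z)| \<le> A(r) / (1 - B(r))\<close> whenever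
  \<open>B(r) < 1\<close>. This is at most \<open>1 - \<alpha>\<close> iff \<open>A(r) + (1 - \<alpha>) B(r) \<le> 1 - \<alpha>\<close>; multiplied by
  \<open>(1 - r)^4\<close>, the closed forms of \<open>A\<close> and \<open>B\<close> turn this into the polynomial inequality
  defining \<open>r0\<close>, and since \<open>A + (1 - \<alpha>) B\<close> is strictly increasing, \<open>r0\<close> is the exact threshold.
  The function \<open>f0(z) = z - \<Sum>_{n\<ge>3} n z^n\<close> has \<open>f0'(r) = 1 - B(r)\<close> and \<open>r f0''(r) = -A(r)\<close>,
  so it attains the bound on the positive axis and shows that \<open>r0\<close> cannot be enlarged.
  Finally \<open>Re (1 + w) \<ge> 1 - |w|\<close> turns \<open>|w| < 1 - \<alpha>\<close> into convexity of order \<open>\<alpha>\<close> and,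
  for \<open>\<alpha> = 1/2\<close>, into uniform convexity.
\<close>

section \<open>Power series\<close>

lemma pochhammer_power_series_sums:
  fixes s :: "'a :: {real_normed_field, banach}"
  assumes "norm s < 1"
  shows "(\<lambda>n. pochhammer (of_nat n + 1) k * s ^ n) sums (fact k / (1 - s) ^ Suc k)"
  using assms
proof (induction k arbitrary: s)
  case 0
  then show ?case using geometric_sums[of s] by simp
next
  case (Suc k)
  have sums_diffs: "(\<lambda>n. diffs (\<lambda>n. pochhammer (of_nat n + 1) k) n * s ^ n)
      sums (fact (Suc k) / (1 - s) ^ Suc (Suc k))"
  proof (rule termdiffs_sums_strong[where K = 1])
    have "((\<lambda>z. inverse (1 - z)) has_field_derivative inverse (1 - s) ^ 2) (at s)"
      using Suc.prems by (auto intro!: derivative_eq_intros simp: power2_eq_square)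
    from DERIV_cmult[OF DERIV_power[OF this, of "Suc k"], of "fact k"]
    have "((\<lambda>z. fact k * inverse (1 - z) ^ Suc k) has_field_derivative
        fact (Suc k) * inverse (1 - s) ^ Suc (Suc k)) (at s)"
      by (simp add: algebra_simps power2_eq_square)
    then show "((\<lambda>z. fact k / (1 - z) ^ Suc k) has_field_derivative
        fact (Suc k) / (1 - s) ^ Suc (Suc k)) (at s)"
      by (simp only: divide_inverse power_inverse)
  qed (use Suc in auto)
  have "diffs (\<lambda>n. pochhammer (of_nat n + 1 :: 'a) k)
      = (\<lambda>n. pochhammer (of_nat n + 1) (Suc k))"
    by (simp add: fun_eq_iff diffs_def pochhammer_rec add_ac)
  with sums_diffs show ?case by simp
qed

lemma sums_less:
  fixes f g :: "nat \<Rightarrow> real"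
  assumes "f sums S" "g sums T" "\<And>n. f n < g n"
  shows "S < T"
proof -
  have "(\<lambda>n. g n - f n) sums (T - S)"
    using assms by (intro sums_diff)
  moreover have "0 < (\<Sum>n. g n - f n)"
    using assms(3) by (intro suminf_pos sums_summable[OF calculation]) auto
  ultimately show ?thesis
    using sums_unique by fastforce
qed

lemma powser_deriv_sums:
  fixes a :: "nat \<Rightarrow> 'a :: {real_normed_field, banach}"
  assumes sums: "\<And>w. norm w < R \<Longrightarrow> (\<lambda>n. a n * w ^ n) sums f w" and z: "norm z < R"
  shows "(\<lambda>n. diffs a n * z ^ n) sums deriv f z"
proof -
  have "((\<lambda>w. \<Sum>n. a n * w ^ n) has_field_derivative (\<Sum>n. diffs a n * z ^ n)) (at z)"
    using sums z by (intro termdiffs_strong') (auto simp: sums_iff)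
  then have "(f has_field_derivative (\<Sum>n. diffs a n * z ^ n)) (at z)"
    by (rule has_field_derivative_transform_within_open [where S = "ball 0 R"])
       (use z sums in \<open>auto simp: sums_iff\<close>)
  then have "deriv f z = (\<Sum>n. diffs a n * z ^ n)"
    by (rule DERIV_imp_deriv)
  moreover have "summable (\<lambda>n. diffs a n * z ^ n)"
    by (rule termdiff_converges[OF z]) (use sums in \<open>auto simp: sums_iff\<close>)
  ultimately show ?thesis
    by (simp add: sums_iff)
qed

text \<open>The majorants \<open>B\<close> and \<open>A\<close> above, in closed form.\<close>

definition deriv_majorant :: "real \<Rightarrow> real" where
  "deriv_majorant s = (1 + s) / (1 - s) ^ 3 - 1 - 4 * s"

definition deriv2_majorant :: "real \<Rightarrow> real" where
  "deriv2_majorant s = 2 * s * (2 + s) / (1 - s) ^ 4 - 4 * s"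

lemma deriv_majorant_sums:
  fixes s :: real
  assumes "\<bar>s\<bar> < 1"
  shows "(\<lambda>n. (real n + 3)\<^sup>2 * s ^ (n + 2)) sums deriv_majorant s"
proof -
  have "(\<lambda>n. pochhammer (real n + 1) 2 * s ^ n - pochhammer (real n + 1) 1 * s ^ n)
      sums (fact 2 / (1 - s) ^ Suc 2 - fact 1 / (1 - s) ^ Suc 1)"
    using assms by (intro sums_diff pochhammer_power_series_sums) auto
  moreover have "pochhammer (real n + 1) 2 - pochhammer (real n + 1) 1 = (real n + 1)\<^sup>2" for n
    by (simp add: pochhammer_rec' eval_nat_numeral algebra_simps)
  moreover have "fact 2 / (1 - s) ^ Suc 2 - fact 1 / (1 - s) ^ Suc 1 = (1 + s) / (1 - s) ^ 3"
    using assms by (simp add: divide_simps) (simp add: algebra_simps eval_nat_numeral)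
  ultimately have "(\<lambda>n. (real n + 1)\<^sup>2 * s ^ n) sums ((1 + s) / (1 - s) ^ 3)"
    by (simp add: left_diff_distrib [symmetric])
  from sums_split_initial_segment [OF this, of 2] show ?thesis
    by (simp add: deriv_majorant_def eval_nat_numeral algebra_simps)
qed

lemma deriv2_majorant_sums:
  fixes s :: real
  assumes "\<bar>s\<bar> < 1"
  shows "(\<lambda>n. (real n + 2) * (real n + 3)\<^sup>2 * s ^ (n + 2)) sums deriv2_majorant s"
proof -
  have "(\<lambda>n. pochhammer (real n + 1) 3 * s ^ n - 4 * (pochhammer (real n + 1) 2 * s ^ n)
        + 2 * (pochhammer (real n + 1) 1 * s ^ n))
      sums (fact 3 / (1 - s) ^ Suc 3 - 4 * (fact 2 / (1 - s) ^ Suc 2)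
            + 2 * (fact 1 / (1 - s) ^ Suc 1))"
    using assms by (intro sums_add sums_diff sums_mult pochhammer_power_series_sums) auto
  moreover have "pochhammer (real n + 1) 3 * s ^ n - 4 * (pochhammer (real n + 1) 2 * s ^ n)
        + 2 * (pochhammer (real n + 1) 1 * s ^ n) = real n * (real n + 1)\<^sup>2 * s ^ n" for n
    by (simp add: pochhammer_rec' eval_nat_numeral algebra_simps)
  moreover have "fact 3 / (1 - s) ^ Suc 3 - 4 * (fact 2 / (1 - s) ^ Suc 2)
      + 2 * (fact 1 / (1 - s) ^ Suc 1) = 2 * s * (2 + s) / (1 - s) ^ 4"
    using assms by (simp add: divide_simps) (simp add: algebra_simps eval_nat_numeral)
  ultimately have "(\<lambda>n. real n * (real n + 1)\<^sup>2 * s ^ n) sums (2 * s * (2 + s) / (1 - s) ^ 4)"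
    by simp
  from sums_split_initial_segment [OF this, of 2] show ?thesis
    by (simp add: deriv2_majorant_def eval_nat_numeral algebra_simps)
qed

lemma deriv_majorant_strict_mono: "strict_mono_on {0..<1} deriv_majorant"
proof (rule strict_mono_onI)
  fix s t :: real
  assume "s \<in> {0..<1}" "t \<in> {0..<1}" "s < t"
  then show "deriv_majorant s < deriv_majorant t"
    by (intro sums_less[OF deriv_majorant_sums deriv_majorant_sums] mult_strict_left_mono
        power_strict_mono) auto
qed

lemma deriv2_majorant_strict_mono: "strict_mono_on {0..<1} deriv2_majorant"
proof (rule strict_mono_onI)
  fix s t :: real
  assume "s \<in> {0..<1}" "t \<in> {0..<1}" "s < t"
  then show "deriv2_majorant s < deriv2_majorant t"
    by (intro sums_less[OF deriv2_majorant_sums deriv2_majorant_sums] mult_strict_left_mono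
        power_strict_mono) auto
qed

lemma deriv2_majorant_pos: "0 < s \<Longrightarrow> s < 1 \<Longrightarrow> 0 < deriv2_majorant s"
  using strict_mono_on_less[OF deriv2_majorant_strict_mono, of 0 s] by (simp add: deriv2_majorant_def)

section \<open>Estimates for the class\<close>

lemma normalized_powser_derivs_sums:
  fixes a :: "nat \<Rightarrow> complex"
  assumes a1: "a 1 = 1" and a2: "a 2 = 0"
    and sums: "\<forall>w\<in>ball 0 1. (\<lambda>n. a n * w ^ n) sums f w" and z: "norm z < 1"
  shows "(\<lambda>n. of_nat (n + 3) * a (n + 3) * z ^ (n + 2)) sums (deriv f z - 1)"
    and "(\<lambda>n. of_nat (n + 2) * of_nat (n + 3) * a (n + 3) * z ^ (n + 2))
           sums (z * deriv (deriv f) z)"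
proof -
  have a1': "a (Suc 0) = 1" and a2': "a (Suc (Suc 0)) = 0"
    using a1 a2 by (simp_all add: numeral_2_eq_2)
  have deriv_sums: "(\<lambda>n. diffs a n * w ^ n) sums deriv f w" if "norm w < 1" for w
    using sums that by (intro powser_deriv_sums[where R = 1]) auto
  from sums_split_initial_segment[OF deriv_sums[OF z], of 2]
  show "(\<lambda>n. of_nat (n + 3) * a (n + 3) * z ^ (n + 2)) sums (deriv f z - 1)"
    by (simp add: diffs_def a1' a2' eval_nat_numeral)
  from sums_split_initial_segment[OF powser_deriv_sums[OF deriv_sums z], of 1]
  have "(\<lambda>n. of_nat (n + 2) * (of_nat (n + 3) * a (n + 3)) * z ^ (n + 1))
      sums deriv (deriv f) z"
    by (simp add: diffs_def a2' eval_nat_numeral)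
  from sums_mult[OF this, of z]
  show "(\<lambda>n. of_nat (n + 2) * of_nat (n + 3) * a (n + 3) * z ^ (n + 2))
      sums (z * deriv (deriv f) z)"
    by (simp add: algebra_simps)
qed

lemma classF_deriv_bounds:
  assumes "f \<in> classF" and z: "norm z < 1"
  shows "norm (deriv f z - 1) \<le> deriv_majorant (norm z)"
    and "norm (z * deriv (deriv f) z) \<le> deriv2_majorant (norm z)"
proof -
  obtain a where a1: "a 1 = 1" and a2: "a 2 = 0" and a_le: "\<forall>n\<ge>3. norm (a n) \<le> real n"
    and sums: "\<forall>w\<in>ball 0 1. (\<lambda>n. a n * w ^ n) sums f w"
    using assms(1) unfolding classF_def by blast
  have coeff_le: "norm (a (n + 3)) \<le> real n + 3" for n
    using a_le[rule_format, of "n + 3"] by simp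
  note derivs_sums = normalized_powser_derivs_sums[OF a1 a2 sums z]
  show "norm (deriv f z - 1) \<le> deriv_majorant (norm z)"
  proof (rule norm_sums_le[OF derivs_sums(1) deriv_majorant_sums])
    fix n
    have "norm (of_nat (n + 3) * a (n + 3) * z ^ (n + 2))
        = (real n + 3) * norm (a (n + 3)) * norm z ^ (n + 2)"
      by (simp only: norm_mult norm_power norm_of_nat) simp
    also have "\<dots> \<le> (real n + 3) * (real n + 3) * norm z ^ (n + 2)"
      by (intro mult_right_mono mult_left_mono coeff_le) auto
    finally show "norm (of_nat (n + 3) * a (n + 3) * z ^ (n + 2))
        \<le> (real n + 3)\<^sup>2 * norm z ^ (n + 2)"
      by (simp add: power2_eq_square)
  qed (use z in simp)
  show "norm (z * deriv (deriv f) z) \<le> deriv2_majorant (norm z)"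
  proof (rule norm_sums_le[OF derivs_sums(2) deriv2_majorant_sums])
    fix n
    have "norm (of_nat (n + 2) * of_nat (n + 3) * a (n + 3) * z ^ (n + 2))
        = (real n + 2) * (real n + 3) * norm (a (n + 3)) * norm z ^ (n + 2)"
      by (simp only: norm_mult norm_power norm_of_nat) simp
    also have "\<dots> \<le> (real n + 2) * (real n + 3) * (real n + 3) * norm z ^ (n + 2)"
      by (intro mult_right_mono mult_left_mono coeff_le) auto
    finally show "norm (of_nat (n + 2) * of_nat (n + 3) * a (n + 3) * z ^ (n + 2))
        \<le> (real n + 2) * (real n + 3)\<^sup>2 * norm z ^ (n + 2)"
      by (simp add: power2_eq_square mult.assoc)
  qed (use z in simp)
qed

lemma norm_divide_le_near_1:
  fixes d q :: "'a :: real_normed_field"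
  assumes "norm (d - 1) \<le> b" "b < 1" "norm q \<le> a"
  shows "d \<noteq> 0" and "norm (q / d) \<le> a / (1 - b)"
proof -
  have d_ge: "1 - b \<le> norm d"
    using assms(1) norm_triangle_ineq2[of 1 d] by (simp add: norm_minus_commute)
  then show "d \<noteq> 0"
    using assms(2) by auto
  show "norm (q / d) \<le> a / (1 - b)"
    unfolding norm_divide using assms d_ge order_trans[OF norm_ge_zero assms(3)]
    by (intro frac_le) auto
qed

lemma classF_convexity_quotient_le:
  assumes "f \<in> classF" "norm z < 1" "deriv_majorant (norm z) < 1"
  shows "deriv f z \<noteq> 0"
    and "norm (z * deriv (deriv f) z / deriv f z)
           \<le> deriv2_majorant (norm z) / (1 - deriv_majorant (norm z))"
  using norm_divide_le_near_1[OF classF_deriv_bounds(1)[OF assms(1,2)] assms(3)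
      classF_deriv_bounds(2)[OF assms(1,2)]] by auto

section \<open>The extremal function\<close>

definition extremal_coeff :: "nat \<Rightarrow> complex" where
  "extremal_coeff n = (if n = 1 then 1 else if n = 2 then 0 else - of_nat n)"

definition extremal_fun :: "complex \<Rightarrow> complex" where
  "extremal_fun z = (\<Sum>n. extremal_coeff n * z ^ n)"

lemma extremal_fun_sums:
  assumes "norm z < 1"
  shows "(\<lambda>n. extremal_coeff n * z ^ n) sums extremal_fun z"
proof -
  have "summable (\<lambda>n. real (Suc n) * norm z ^ n)"
    using geometric_deriv_sums[of "norm z"] assms by (auto dest: sums_summable)
  then have "summable (\<lambda>n. extremal_coeff n * z ^ n)"
    by (rule summable_comparison_test')
       (auto simp: extremal_coeff_def norm_mult norm_power intro!: mult_right_mono)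
  then show ?thesis
    by (simp add: extremal_fun_def summable_sums)
qed

lemma extremal_fun_in_classF: "extremal_fun \<in> classF"
  unfolding classF_def using extremal_fun_sums
  by (intro CollectI exI[of _ extremal_coeff]) (auto simp: extremal_coeff_def)

lemma extremal_fun_derivs:
  fixes t :: real
  assumes "\<bar>t\<bar> < 1"
  shows "deriv extremal_fun t = 1 - of_real (deriv_majorant t)"
    and "t * deriv (deriv extremal_fun) t = - of_real (deriv2_majorant t)"
proof -
  have sums: "\<forall>w\<in>ball 0 1. (\<lambda>n. extremal_coeff n * w ^ n) sums extremal_fun w"
    using extremal_fun_sums by simp
  note derivs_sums = normalized_powser_derivs_sums[of extremal_coeff, OF _ _ sums, of "of_real t"]
  have "(\<lambda>n. - of_real ((real n + 3)\<^sup>2 * t ^ (n + 2))) sums (deriv extremal_fun t - 1)"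
  proof -
    have "of_nat (n + 3) * extremal_coeff (n + 3) * of_real t ^ (n + 2)
        = - of_real ((real n + 3)\<^sup>2 * t ^ (n + 2))" for n
      by (simp add: extremal_coeff_def power2_eq_square algebra_simps)
    with derivs_sums(1) assms show ?thesis
      by (simp add: extremal_coeff_def)
  qed
  moreover have "(\<lambda>n. - of_real ((real n + 3)\<^sup>2 * t ^ (n + 2)))
      sums (- of_real (deriv_majorant t) :: complex)"
    using assms by (intro sums_minus sums_of_real deriv_majorant_sums)
  ultimately have "deriv extremal_fun t - 1 = - of_real (deriv_majorant t)"
    by (rule sums_unique2)
  then show "deriv extremal_fun t = 1 - of_real (deriv_majorant t)"
    by (simp add: algebra_simps)
  have "(\<lambda>n. - of_real ((real n + 2) * (real n + 3)\<^sup>2 * t ^ (n + 2)))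
      sums (of_real t * deriv (deriv extremal_fun) t)"
  proof -
    have "of_nat (n + 2) * of_nat (n + 3) * extremal_coeff (n + 3) * of_real t ^ (n + 2)
        = - of_real ((real n + 2) * (real n + 3)\<^sup>2 * t ^ (n + 2))" for n
      by (simp add: extremal_coeff_def power2_eq_square algebra_simps)
    with derivs_sums(2) assms show ?thesis
      by (simp add: extremal_coeff_def)
  qed
  moreover have "(\<lambda>n. - of_real ((real n + 2) * (real n + 3)\<^sup>2 * t ^ (n + 2)))
      sums (- of_real (deriv2_majorant t) :: complex)"
    using assms by (intro sums_minus sums_of_real deriv2_majorant_sums)
  ultimately show "t * deriv (deriv extremal_fun) t = - of_real (deriv2_majorant t)"
    by (rule sums_unique2)
qed

section \<open>The defining polynomial\<close>

definition convexity_poly :: "real \<Rightarrow> real \<Rightarrow> real" where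
  "convexity_poly \<alpha> r =
     2 * (1 - \<alpha> + 2 * (2 - \<alpha>) * r) * (1 - r) ^ 4 - (1 - \<alpha> + 4 * r + (1 + \<alpha>) * r ^ 2)"

definition convexity_majorant :: "real \<Rightarrow> real \<Rightarrow> real" where
  "convexity_majorant \<alpha> s = deriv2_majorant s + (1 - \<alpha>) * deriv_majorant s"

lemma convexity_poly_eq_majorant:
  assumes "s \<noteq> 1"
  shows "convexity_poly \<alpha> s = (1 - s) ^ 4 * (1 - \<alpha> - convexity_majorant \<alpha> s)"
proof -
  have "1 - s \<noteq> 0"
    using assms by simp
  then show ?thesis
    unfolding convexity_poly_def convexity_majorant_def deriv_majorant_def deriv2_majorant_def
    by (simp add: field_simps) (simp add: algebra_simps eval_nat_numeral)
qed

lemma convexity_majorant_strict_mono: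
  assumes "\<alpha> \<le> 1"
  shows "strict_mono_on {0..<1} (convexity_majorant \<alpha>)"
proof (rule strict_mono_onI)
  fix s t :: real
  assume "s \<in> {0..<1}" "t \<in> {0..<1}" "s < t"
  then have "deriv2_majorant s < deriv2_majorant t" "deriv_majorant s \<le> deriv_majorant t"
    using strict_mono_on_less[OF deriv2_majorant_strict_mono]
      strict_mono_on_less_eq[OF deriv_majorant_strict_mono] by auto
  then show "convexity_majorant \<alpha> s < convexity_majorant \<alpha> t"
    unfolding convexity_majorant_def using assms by (simp add: add_less_le_mono mult_left_mono)
qed

section \<open>The radii\<close>

lemma divide_one_minus_le_iff:
  fixes a b k :: real
  assumes "b < 1"
  shows "a / (1 - b) \<le> k \<longleftrightarrow> a + k * b \<le> k"
    and "a / (1 - b) < k \<longleftrightarrow> a + k * b < k"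
  using assms by (simp_all add: pos_divide_le_eq pos_divide_less_eq algebra_simps)

lemma Sup_radius_eqI:
  fixes F :: "'f set" and P :: "'f \<Rightarrow> complex \<Rightarrow> bool"
  assumes "0 < r0" "r0 \<le> 1"
    and "\<And>f z. f \<in> F \<Longrightarrow> norm z < r0 \<Longrightarrow> P f z"
    and "\<And>r. r0 < r \<Longrightarrow> \<exists>f\<in>F. \<exists>z. norm z < r \<and> \<not> P f z"
  shows "Sup {r. 0 < r \<and> r \<le> 1 \<and> (\<forall>f\<in>F. \<forall>z. norm z < r \<longrightarrow> P f z)} = r0"
proof (rule cSup_eq_maximum)
  show "r0 \<in> {r. 0 < r \<and> r \<le> 1 \<and> (\<forall>f\<in>F. \<forall>z. norm z < r \<longrightarrow> P f z)}"
    using assms(1-3) by auto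
next
  fix r
  assume "r \<in> {r. 0 < r \<and> r \<le> 1 \<and> (\<forall>f\<in>F. \<forall>z. norm z < r \<longrightarrow> P f z)}"
  then have r_good: "\<forall>f\<in>F. \<forall>z. norm z < r \<longrightarrow> P f z"
    by simp
  show "r \<le> r0"
  proof (rule ccontr)
    assume "\<not> r \<le> r0"
    then obtain f z where "f \<in> F" "norm z < r" "\<not> P f z"
      using assms(4) by force
    with r_good show False
      by blast
  qed
qed

locale convexity_root =
  fixes \<alpha> r0 :: real
  assumes alpha_less_1: "\<alpha> < 1" and r0_pos: "0 < r0" and r0_less_1: "r0 < 1"
    and poly_root: "convexity_poly \<alpha> r0 = 0"
begin

lemma convexity_majorant_root: "convexity_majorant \<alpha> r0 = 1 - \<alpha>"
  using convexity_poly_eq_majorant[of r0 \<alpha>] poly_root r0_less_1 by simp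

lemma deriv_majorant_root_less_1: "deriv_majorant r0 < 1"
proof -
  have "(1 - \<alpha>) * deriv_majorant r0 < (1 - \<alpha>) * 1"
    using convexity_majorant_root deriv2_majorant_pos[OF r0_pos r0_less_1]
    unfolding convexity_majorant_def by simp
  then show ?thesis
    using alpha_less_1 by simp
qed

lemma convexity_majorant_less_iff:
  assumes "0 \<le> s" "s < 1"
  shows "convexity_majorant \<alpha> s < 1 - \<alpha> \<longleftrightarrow> s < r0"
  using strict_mono_on_less[OF convexity_majorant_strict_mono, of \<alpha> s r0]
    convexity_majorant_root assms alpha_less_1 r0_pos r0_less_1 by simp

lemma convexity_majorant_le_iff:
  assumes "0 \<le> s" "s < 1"
  shows "convexity_majorant \<alpha> s \<le> 1 - \<alpha> \<longleftrightarrow> s \<le> r0"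
  using strict_mono_on_less_eq[OF convexity_majorant_strict_mono, of \<alpha> s r0]
    convexity_majorant_root assms alpha_less_1 r0_pos r0_less_1 by simp

lemma convexity_poly_pos_iff:
  assumes "0 \<le> x" "x < 1"
  shows "0 < convexity_poly \<alpha> x \<longleftrightarrow> x < r0"
  using convexity_poly_eq_majorant[of x \<alpha>] convexity_majorant_less_iff[OF assms] assms
  by (simp add: zero_less_mult_iff)

lemma convexity_poly_neg_iff:
  assumes "0 \<le> x" "x < 1"
  shows "convexity_poly \<alpha> x < 0 \<longleftrightarrow> r0 < x"
  using convexity_poly_eq_majorant[of x \<alpha>] convexity_majorant_le_iff[OF assms] assms
  by (auto simp: mult_less_0_iff)

lemma classF_convexity_bound:
  assumes f: "f \<in> classF" and z: "norm z \<le> r0"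
  shows "deriv f z \<noteq> 0"
    and "norm (z * deriv (deriv f) z / deriv f z) \<le> 1 - \<alpha>"
    and "norm z < r0 \<Longrightarrow> norm (z * deriv (deriv f) z / deriv f z) < 1 - \<alpha>"
proof -
  let ?s = "norm z"
  have s: "0 \<le> ?s" "?s < 1"
    using z r0_less_1 by auto
  have "deriv_majorant ?s \<le> deriv_majorant r0"
    using strict_mono_on_less_eq[OF deriv_majorant_strict_mono, of ?s r0] z s r0_pos r0_less_1
    by simp
  then have B_less: "deriv_majorant ?s < 1"
    using deriv_majorant_root_less_1 by linarith
  note quotient = classF_convexity_quotient_le[OF f s(2) B_less]
  show "deriv f z \<noteq> 0"
    by (rule quotient(1))
  have "deriv2_majorant ?s / (1 - deriv_majorant ?s) \<le> 1 - \<alpha>"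
    using convexity_majorant_le_iff[OF s] z
    unfolding divide_one_minus_le_iff(1)[OF B_less] convexity_majorant_def by simp
  with quotient(2) show "norm (z * deriv (deriv f) z / deriv f z) \<le> 1 - \<alpha>"
    by (rule order_trans)
  assume "?s < r0"
  then have "deriv2_majorant ?s / (1 - deriv_majorant ?s) < 1 - \<alpha>"
    using convexity_majorant_less_iff[OF s]
    unfolding divide_one_minus_le_iff(2)[OF B_less] convexity_majorant_def by simp
  with quotient(2) show "norm (z * deriv (deriv f) z / deriv f z) < 1 - \<alpha>"
    by (rule order_le_less_trans)
qed

lemma extremal_fun_beyond_root:
  assumes "r0 < r"
  obtains z c where "norm z < r" "norm z < 1" "1 - \<alpha> < c"
    and "z * deriv (deriv extremal_fun) z / deriv extremal_fun z = - of_real c"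
proof -
  have "isCont deriv_majorant r0"
    unfolding deriv_majorant_def using r0_less_1 by (intro continuous_intros) auto
  then have "\<forall>\<^sub>F t in at r0. deriv_majorant t < 1"
    unfolding isCont_def using deriv_majorant_root_less_1 by (rule order_tendstoD(2))
  then obtain b where b: "r0 < b" "\<And>t. r0 < t \<Longrightarrow> t < b \<Longrightarrow> deriv_majorant t < 1"
    by (auto simp: eventually_at_split eventually_at_right_field)
  define t where "t = (r0 + min b (min r 1)) / 2"
  have t: "r0 < t" "t < r" "t < 1" "t < b"
    using assms b(1) r0_less_1 by (auto simp: t_def)
  have B_less: "deriv_majorant t < 1"
    using b(2) t by auto
  have "\<not> convexity_majorant \<alpha> t \<le> 1 - \<alpha>"
    using convexity_majorant_le_iff[of t] t r0_pos by auto
  then have c: "1 - \<alpha> < deriv2_majorant t / (1 - deriv_majorant t)"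
    unfolding not_le [symmetric] divide_one_minus_le_iff(1)[OF B_less] convexity_majorant_def .
  have "\<bar>t\<bar> < 1"
    using t r0_pos by auto
  note derivs = extremal_fun_derivs[OF this]
  have "of_real t * deriv (deriv extremal_fun) (of_real t) / deriv extremal_fun (of_real t)
      = - of_real (deriv2_majorant t / (1 - deriv_majorant t))"
    unfolding derivs by simp
  then show thesis
    using that[of "of_real t"] t c r0_pos by auto
qed

lemma radius_convexity_order_classF: "radius_convexity_order \<alpha> classF = r0"
  unfolding radius_convexity_order_def
proof (rule Sup_radius_eqI)
  fix f and z :: complex
  assume "f \<in> classF" "norm z < r0"
  then show "deriv f z \<noteq> 0 \<and> \<alpha> < Re (1 + z * deriv (deriv f) z / deriv f z)"
    using classF_convexity_bound[of f z] abs_Re_le_cmod[of "z * deriv (deriv f) z / deriv f z"]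
    by auto
next
  fix r
  assume "r0 < r"
  then obtain z c where "norm z < r" "1 - \<alpha> < c"
    and "z * deriv (deriv extremal_fun) z / deriv extremal_fun z = - of_real c"
    by (rule extremal_fun_beyond_root)
  then show "\<exists>f\<in>classF. \<exists>z. norm z < r \<and>
      \<not> (deriv f z \<noteq> 0 \<and> \<alpha> < Re (1 + z * deriv (deriv f) z / deriv f z))"
    using extremal_fun_in_classF by (intro bexI[of _ extremal_fun] exI[of _ z]) auto
qed (use r0_pos r0_less_1 in auto)

lemma radius_uniform_convexity_classF:
  assumes "\<alpha> = 1/2"
  shows "radius_uniform_convexity classF = r0"
  unfolding radius_uniform_convexity_def
proof (rule Sup_radius_eqI)
  fix f and z :: complex
  let ?w = "z * deriv (deriv f) z / deriv f z"
  assume "f \<in> classF" "norm z < r0"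
  then show "deriv f z \<noteq> 0 \<and> norm ?w < Re (1 + ?w)"
    using classF_convexity_bound[of f z] abs_Re_le_cmod[of ?w] assms by auto
next
  fix r
  assume "r0 < r"
  then obtain z c where "norm z < r" "1 - \<alpha> < c"
    and "z * deriv (deriv extremal_fun) z / deriv extremal_fun z = - of_real c"
    by (rule extremal_fun_beyond_root)
  then show "\<exists>f\<in>classF. \<exists>z. norm z < r \<and>
      \<not> (deriv f z \<noteq> 0 \<and> norm (z * deriv (deriv f) z / deriv f z)
            < Re (1 + z * deriv (deriv f) z / deriv f z))"
    using extremal_fun_in_classF assms by (intro bexI[of _ extremal_fun] exI[of _ z]) auto
qed (use r0_pos r0_less_1 in auto)

end

theorem corollary3p4:
  fixes \<alpha> r0 :: real
  assumes "0 \<le> \<alpha>" and "\<alpha> < 1"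
    and "0 < r0" and "r0 < 1"
    and "2 * (1 - \<alpha> + 2 * (2 - \<alpha>) * r0) * (1 - r0) ^ 4 = 1 - \<alpha> + 4 * r0 + (1 + \<alpha>) * r0 ^ 2"
  shows "(\<forall>f\<in>classF. \<forall>z. norm z \<le> r0 \<longrightarrow>
            deriv f z \<noteq> 0 \<and> norm (z * deriv (deriv f) z / deriv f z) \<le> 1 - \<alpha>)
       \<and> (\<forall>r>r0. \<exists>f\<in>classF. \<exists>z. norm z \<le> r \<and> norm z < 1 \<and>
            (deriv f z = 0 \<or> norm (z * deriv (deriv f) z / deriv f z) > 1 - \<alpha>))
       \<and> radius_convexity_order \<alpha> classF = r0
       \<and> (\<alpha> = 1/2 \<longrightarrow> radius_uniform_convexity classF = r0
                        \<and> 0.1254285 \<le> r0 \<and> r0 < 0.1254295)"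
proof -
  interpret convexity_root \<alpha> r0
    using assms(2-5) by unfold_locales (simp_all add: convexity_poly_def)
  have sharp: "\<exists>f\<in>classF. \<exists>z. norm z \<le> r \<and> norm z < 1 \<and>
      (deriv f z = 0 \<or> norm (z * deriv (deriv f) z / deriv f z) > 1 - \<alpha>)" if "r0 < r" for r
  proof -
    obtain z c where "norm z < r" "norm z < 1" "1 - \<alpha> < c"
      and "z * deriv (deriv extremal_fun) z / deriv extremal_fun z = - of_real c"
      using extremal_fun_beyond_root[OF \<open>r0 < r\<close>] .
    then show ?thesis
      using extremal_fun_in_classF by (intro bexI[of _ extremal_fun] exI[of _ z]) auto
  qed
  have "0.1254285 \<le> r0 \<and> r0 < 0.1254295" if "\<alpha> = 1/2"
    using convexity_poly_pos_iff[of "0.1254285"] convexity_poly_neg_iff[of "0.1254295"] that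
    by (simp add: convexity_poly_def power_divide)
  then show ?thesis
    using classF_convexity_bound sharp radius_convexity_order_classF
      radius_uniform_convexity_classF by auto
qed

end
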